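(* Let $n>2$, let $G_n=BS(1,n)=\langle a,b\mid bab^{-1}=a^n\rangle$, and let $\Gamma_n$ be its Cayley graph with respect to $\{a,b\}$. Let $x,y\in G_n$. If there exist $k,k'\in\mathbb{N}$ such that, with $\tilde{x}=xb^k$ and $\tilde{y}=yb^{k'}$, one has $\tilde{y}=\tilde{x}a$, then there is a geodesic in $\Gamma_n$ between $x$ and $y$ containing $\tilde{x}$ and $\tilde{y}$.
   Context: $\Gamma_n$ has vertex set $G_n$ and edges $\{g,gs\}$ for $s\in\{a^{\pm1},b^{\pm1}\}$, each of length 1, with the path-length metric. *)

theory Defs
  imports Complex_Main
begin

text \<open>Concrete model of BS(1,n) = < a, b | b a b^-1 = a^n >:
  the element (r, k) is the affine map t \<mapsto> n^k * t + r of the rationals;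
  the group product is composition, a = (1,0) (t \<mapsto> t+1), b = (0,1) (t \<mapsto> n t).
  Then b a b^-1 = a^n, and the subgroup generated by a, b consists exactly of
  the pairs (r,k) with r in Z[1/n] and k in Z.\<close>

type_synonym bs_elt = "rat \<times> int"

definition bs_mult :: "nat \<Rightarrow> bs_elt \<Rightarrow> bs_elt \<Rightarrow> bs_elt" where
  "bs_mult n g h = (fst g + (of_nat n) powi (snd g) * fst h, snd g + snd h)"

definition bs_one :: bs_elt where "bs_one = (0, 0)"
definition bs_a :: bs_elt where "bs_a = (1, 0)"
definition bs_a_inv :: bs_elt where "bs_a_inv = (-1, 0)"
definition bs_b :: bs_elt where "bs_b = (0, 1)"
definition bs_b_inv :: bs_elt where "bs_b_inv = (0, -1)"

fun bs_pow :: "nat \<Rightarrow> bs_elt \<Rightarrow> nat \<Rightarrow> bs_elt" where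
  "bs_pow n g 0 = bs_one"
| "bs_pow n g (Suc k) = bs_mult n (bs_pow n g k) g"

definition bs_carrier :: "nat \<Rightarrow> bs_elt set" where
  "bs_carrier n = {g. \<exists>m::int. \<exists>j::nat. fst g = of_int m / of_nat n ^ j}"

definition bs_gens :: "bs_elt set" where
  "bs_gens = {bs_a, bs_a_inv, bs_b, bs_b_inv}"

definition bs_adj :: "nat \<Rightarrow> bs_elt \<Rightarrow> bs_elt \<Rightarrow> bool" where
  "bs_adj n g h \<longleftrightarrow> (\<exists>s\<in>bs_gens. h = bs_mult n g s)"

definition bs_path :: "nat \<Rightarrow> bs_elt list \<Rightarrow> bool" where
  "bs_path n p \<longleftrightarrow> p \<noteq> [] \<and> (\<forall>i. Suc i < length p \<longrightarrow> bs_adj n (p ! i) (p ! Suc i))"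

definition bs_dist :: "nat \<Rightarrow> bs_elt \<Rightarrow> bs_elt \<Rightarrow> nat" where
  "bs_dist n g h = (LEAST m. \<exists>p. bs_path n p \<and> hd p = g \<and> last p = h \<and> length p = Suc m)"

definition bs_geodesic :: "nat \<Rightarrow> bs_elt \<Rightarrow> bs_elt \<Rightarrow> bs_elt list \<Rightarrow> bool" where
  "bs_geodesic n g h p \<longleftrightarrow> bs_path n p \<and> hd p = g \<and> last p = h \<and> length p = Suc (bs_dist n g h)"

end

theory Submission
  imports Defs
begin

text \<open>In the model, x = (r, m) and y = (r + n^(m+k), m + k - k'), and the word b^k a b^-k'
  gives a path of length k + k' + 1 through x b^k and y b^k'. For the lower bound, an a-edge at
  level l moves the first coordinate by n^l, and b-edges change the level by one. If a path
  from x to y reaches maximal level M, it needs at least 2M - m - (m + k - k') b-edges; if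
  M = m + k - j with j > 0, it needs at least n^j \<ge> 2j + 1 a-edges (here n \<ge> 3 is used), which
  more than pays for the 2j b-edges saved.\<close>

lemma bs_path_Cons:
  "bs_path n (u # q) \<longleftrightarrow> q = [] \<or> (bs_adj n u (hd q) \<and> bs_path n q)"
  unfolding bs_path_def by (cases q) (auto simp: nth_Cons' less_Suc_eq_0_disj)

lemma bs_adj_cases:
  assumes "bs_adj n u w"
  obtains (a_edge) "snd w = snd u" "\<bar>fst w - fst u\<bar> = of_nat n powi snd u"
        | (b_edge) "fst w = fst u" "\<bar>snd w - snd u\<bar> = 1"
  using assms
  by (auto simp: bs_adj_def bs_gens_def bs_mult_def bs_a_def bs_a_inv_def bs_b_def bs_b_inv_def)

text \<open>By \<open>bs_adj_cases\<close>, the edges of a path that keep the level are exactly its a-edges.\<close>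

fun a_edges :: "bs_elt list \<Rightarrow> nat" where
  "a_edges (u # v # rest) = (if snd u = snd v then 1 else 0) + a_edges (v # rest)"
| "a_edges _ = 0"

fun b_edges :: "bs_elt list \<Rightarrow> nat" where
  "b_edges (u # v # rest) = (if snd u = snd v then 0 else 1) + b_edges (v # rest)"
| "b_edges _ = 0"

lemma a_edges_plus_b_edges: "a_edges p + b_edges p = length p - 1"
  by (induction p rule: a_edges.induct) auto

lemma bs_path_fst_diff_le:
  assumes "n > 0" "bs_path n p" "\<forall>v\<in>set p. snd v \<le> H"
  shows "\<bar>fst (last p) - fst (hd p)\<bar> \<le> of_nat (a_edges p) * of_nat n powi H"
  using assms(2,3)
proof (induction p rule: a_edges.induct)
  case (1 u v rest)
  have adj: "bs_adj n u v" and path: "bs_path n (v # rest)"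
    using "1.prems"(1) by (auto simp: bs_path_Cons)
  have IH: "\<bar>fst (last (v # rest)) - fst v\<bar> \<le> of_nat (a_edges (v # rest)) * of_nat n powi H"
    using 1 path by simp
  have step_le: "(of_nat n :: rat) powi snd u \<le> of_nat n powi H"
    using assms(1) "1.prems"(2) by (intro power_int_increasing) auto
  from adj show ?case
  proof (cases rule: bs_adj_cases)
    case a_edge
    then show ?thesis using IH step_le by (simp add: distrib_right abs_triangle_ineq4)
  next
    case b_edge
    then have "snd u \<noteq> snd v" by auto
    then show ?thesis using b_edge IH by simp
  qed
qed (auto simp: bs_path_def)

lemma bs_path_snd_diff_le:
  "bs_path n p \<Longrightarrow> \<bar>snd (last p) - snd (hd p)\<bar> \<le> int (b_edges p)"
proof (induction p rule: b_edges.induct)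
  case (1 u v rest)
  then have "bs_adj n u v" "\<bar>snd (last (v # rest)) - snd v\<bar> \<le> int (b_edges (v # rest))"
    by (auto simp: bs_path_Cons)
  then show ?case by (cases rule: bs_adj_cases) auto
qed (auto simp: bs_path_def)

lemma bs_path_climb_le_b_edges:
  "bs_path n p \<Longrightarrow> v \<in> set p \<Longrightarrow> (snd v - snd (hd p)) + (snd v - snd (last p)) \<le> int (b_edges p)"
proof (induction p rule: b_edges.induct)
  case (1 u w rest)
  have adj: "bs_adj n u w" and path: "bs_path n (w # rest)"
    using "1.prems"(1) by (auto simp: bs_path_Cons)
  have IH: "v \<in> set (w # rest) \<Longrightarrow>
      (snd v - snd w) + (snd v - snd (last (w # rest))) \<le> int (b_edges (w # rest))"
    using "1.IH" path by simp
  have "\<bar>snd (last (w # rest)) - snd w\<bar> \<le> int (b_edges (w # rest))"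
    using bs_path_snd_diff_le[OF path] by simp
  with adj IH "1.prems"(2) show ?case by (cases rule: bs_adj_cases) auto
qed (auto simp: bs_path_def)

lemma two_mul_plus_one_le_power: "3 \<le> (n::nat) \<Longrightarrow> 2 * j + 1 \<le> n ^ j"
proof (induction j)
  case (Suc j)
  then have "2 * Suc j + 1 \<le> 3 * n ^ j" by simp
  also have "\<dots> \<le> n ^ Suc j" using Suc.prems by simp
  finally show ?case .
qed simp

lemma bs_path_length_ge:
  assumes "n > 2" and path: "bs_path n p"
    and ends: "hd p = (r, m)" "last p = (r + of_nat n powi h, m')"
  shows "(h - m) + (h - m') + 2 \<le> int (length p)"
proof -
  have "p \<noteq> []" using path by (simp add: bs_path_def)
  define M where "M = Max (snd ` set p)"
  have below: "\<forall>v\<in>set p. snd v \<le> M"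
    unfolding M_def by simp
  have "M \<in> snd ` set p"
    unfolding M_def using \<open>p \<noteq> []\<close> by (intro Max_in) auto
  then obtain v where "v \<in> set p" "snd v = M" by blast
  with path ends have climb: "(M - m) + (M - m') \<le> int (b_edges p)"
    using bs_path_climb_le_b_edges by fastforce
  have a_bound: "(of_nat n :: rat) powi h \<le> of_nat (a_edges p) * of_nat n powi M"
    using bs_path_fst_diff_le[OF _ path below] assms(1) ends by simp
  have len: "int (length p) = int (a_edges p) + int (b_edges p) + 1"
    using a_edges_plus_b_edges[of p] \<open>p \<noteq> []\<close> by (cases p) auto
  have n_pos: "(0::rat) < of_nat n" using assms(1) by simp
  show ?thesis
  proof (cases "h \<le> M")
    case True
    have "a_edges p \<noteq> 0"
    proof
      assume "a_edges p = 0"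
      then show False using a_bound zero_less_power_int[OF n_pos, of h] by simp
    qed
    with True climb len show ?thesis by linarith
  next
    case False
    define j where "j = nat (h - M)"
    have h: "h = M + int j" using False j_def by simp
    have "of_nat n powi M * (of_nat n :: rat) ^ j \<le> of_nat n powi M * of_nat (a_edges p)"
      using a_bound n_pos by (simp add: h power_int_add mult.commute)
    then have "n ^ j \<le> a_edges p"
      using zero_less_power_int[OF n_pos, of M] by (simp flip: of_nat_power)
    moreover have "2 * j + 1 \<le> n ^ j"
      using assms(1) by (intro two_mul_plus_one_le_power) simp
    ultimately show ?thesis using h climb len by linarith
  qed
qed

lemma bs_geodesicI:
  assumes path: "bs_path n p" "hd p = g" "last p = h"
    and shortest: "\<And>q. bs_path n q \<Longrightarrow> hd q = g \<Longrightarrow> last q = h \<Longrightarrow> length p \<le> length q"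
  shows "bs_geodesic n g h p"
proof -
  obtain d where d: "length p = Suc d"
    using path(1) by (cases p) (auto simp: bs_path_def)
  have "bs_dist n g h = d"
    unfolding bs_dist_def
  proof (rule Least_equality)
    show "\<exists>q. bs_path n q \<and> hd q = g \<and> last q = h \<and> length q = Suc d"
      using path d by blast
  qed (use shortest d in fastforce)
  with path d show ?thesis by (simp add: bs_geodesic_def)
qed

fun bs_walk :: "nat \<Rightarrow> bs_elt \<Rightarrow> bs_elt list \<Rightarrow> bs_elt list" where
  "bs_walk n g [] = [g]"
| "bs_walk n g (s # ss) = g # bs_walk n (bs_mult n g s) ss"

lemma hd_bs_walk [simp]: "hd (bs_walk n g ss) = g"
  by (cases ss) auto

lemma length_bs_walk [simp]: "length (bs_walk n g ss) = Suc (length ss)"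
  by (induction ss arbitrary: g) auto

lemma last_bs_walk [simp]: "last (bs_walk n g ss) = foldl (bs_mult n) g ss"
  by (induction ss arbitrary: g) (auto simp: neq_Nil_conv elim: bs_walk.elims)

lemma bs_path_bs_walk: "set ss \<subseteq> bs_gens \<Longrightarrow> bs_path n (bs_walk n g ss)"
  by (induction ss arbitrary: g) (auto simp: bs_path_Cons bs_adj_def)

lemma foldl_take_in_bs_walk: "foldl (bs_mult n) g (take i ss) \<in> set (bs_walk n g ss)"
  by (induction ss arbitrary: g i) (auto simp: take_Cons')

lemma foldl_bs_mult_replicate:
  "foldl (bs_mult n) (r, m) (replicate k bs_b) = (r, m + int k)"
  "foldl (bs_mult n) (r, m) (replicate k bs_b_inv) = (r, m - int k)"
  by (induction k arbitrary: m) (auto simp: bs_mult_def bs_b_def bs_b_inv_def)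

lemma bs_mult_pow_b: "bs_mult n g (bs_pow n bs_b k) = (fst g, snd g + int k)"
proof -
  have "bs_pow n bs_b k = (0, int k)"
    by (induction k) (auto simp: bs_one_def bs_mult_def bs_b_def)
  then show ?thesis by (simp add: bs_mult_def)
qed

theorem lemma2:
  fixes n :: nat and x y :: bs_elt and k k' :: nat
  assumes "n > 2"
    and "x \<in> bs_carrier n" and "y \<in> bs_carrier n"
    and "bs_mult n y (bs_pow n bs_b k') = bs_mult n (bs_mult n x (bs_pow n bs_b k)) bs_a"
  shows "\<exists>p. bs_geodesic n x y p
           \<and> bs_mult n x (bs_pow n bs_b k) \<in> set p
           \<and> bs_mult n y (bs_pow n bs_b k') \<in> set p"
proof -
  obtain r m where x: "x = (r, m)" by fastforce
  define h where "h = m + int k"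
  define s where "s = r + of_nat n powi h"
  have xk: "bs_mult n x (bs_pow n bs_b k) = (r, h)"
    by (simp add: x h_def bs_mult_pow_b)
  with assms(4) have yk: "bs_mult n y (bs_pow n bs_b k') = (s, h)"
    by (simp add: s_def bs_mult_def bs_a_def)
  then have y: "y = (s, h - int k')"
    by (simp add: bs_mult_pow_b prod_eq_iff)
  define w where "w = replicate k bs_b @ bs_a # replicate k' bs_b_inv"
  define p where "p = bs_walk n x w"
  have path: "bs_path n p"
    unfolding p_def w_def by (rule bs_path_bs_walk) (auto simp: bs_gens_def)
  have ends: "hd p = x" "last p = y"
    by (simp_all add: p_def w_def x y s_def h_def foldl_bs_mult_replicate bs_mult_def bs_a_def)
  have "(r, h) \<in> set p" "(s, h) \<in> set p"
    using foldl_take_in_bs_walk[of n x k w] foldl_take_in_bs_walk[of n x "Suc k" w]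
    by (simp_all add: p_def w_def x s_def h_def foldl_bs_mult_replicate bs_mult_def bs_a_def)
  moreover have "bs_geodesic n x y p"
  proof (rule bs_geodesicI[OF path ends])
    fix q assume "bs_path n q" "hd q = x" "last q = y"
    then have "(h - m) + (h - (h - int k')) + 2 \<le> int (length q)"
      by (intro bs_path_length_ge[OF assms(1)]) (simp_all add: x y s_def)
    then show "length p \<le> length q" by (simp add: p_def w_def h_def)
  qed
  ultimately show ?thesis unfolding xk yk by blast
qed

end
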